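(* Consider the system $x(k+1)=Ax(k)+Bu(k)+w(k)$ in closed loop with the control scheme described in the context (Algorithm ATCS with parameter $\lambda$), and suppose that the problem $\mathbb{P}_0(x(0),\{0\})$ is feasible. Then: (i) for every iteration $k=1,2,\ldots$ reached by the algorithm and for any disturbance realization with $w(k)\in\mathcal{W}$ for all $k$, the problem $\mathbb{P}_k(x(k),\mathcal{Z}_{f,k})$, with the terminal set $\mathcal{Z}_{f,k}$ defined according to the algorithm (and with the additional constraint $N_k\le N^*_{k-1}-1$ whenever the second branch of the algorithm is taken), is feasible; (ii) if the weights $\gamma_v,\gamma_z\ge 0$ are selected such that $$\bar\lambda = 1-\sup_{w\in\mathcal{W}}\Big\{\gamma_z\sum_{j=0}^{\infty}\|A_K^j w\|+\gamma_v\sum_{j=0}^{\infty}\|K A_K^j w\|\Big\}>0$$ and $\lambda=\bar\lambda$ is used in the algorithm, then the optimal cost decreases by at least $\bar\lambda$ at each step, i.e. $J^*_{k+1}\le J^*_k-\bar\lambda$ for all $k$.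
   Context: System: $x(k+1)=Ax(k)+Bu(k)+w(k)$ with $x(k)\in\mathbb{R}^n$, $u(k)\in\mathbb{R}^m$, disturbance $w(k)\in\mathcal{W}$; state/input constraints $x(k)\in\mathcal{X}(k)$, $u(k)\in\mathcal{U}(k)$, where $\mathcal{X}(k),\mathcal{U}(k),\mathcal{W}$ are convex sets. A reference trajectory $r(k)\in\mathbb{R}^n$ is given. $K\in\mathbb{R}^{m\times n}$ is such that $A_K=A+BK$ is Schur. $\mathcal{A}\oplus\mathcal{B}=\{a+b: a\in\mathcal{A},b\in\mathcal{B}\}$ (Minkowski sum), $\mathcal{A}\ominus\mathcal{B}=\{a: \{a\}\oplus\mathcal{B}\subseteq\mathcal{A}\}$ (Pontryagin difference). Define $\mathcal{S}(0)=\{0\}$ and $\mathcal{S}(j)=\bigoplus_{i=0}^{j-1}A_K^i\mathcal{W}$ for $j\ge1$; tightened sets $\mathcal{Z}_k(j)=\mathcal{X}(k+j)\ominus\mathcal{S}(j)$, $\mathcal{V}_k(j)=\mathcal{U}(k+j)\ominus K\mathcal{S}(j)$. Fix weights $\gamma_z,\gamma_v\ge0$ and a vector norm $\|\cdot\|$ (possibly weighted). Problem $\mathbb{P}_k(x(k),\mathcal{Z}_f)$, for a convex set $\mathcal{Z}_f$: minimize over $N_k\in\{1,2,\ldots\}$, $v_k(0),\ldots,v_k(N_k-1)$, $z_k(0),\ldots,z_k(N_k)$ the cost $J_k=N_k+\gamma_z\sum_{j=0}^{N_k}\|z_k(j)-r(k+j)\|+\gamma_v\sum_{j=0}^{N_k-1}\|v_k(j)\|$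 subject to $z_k(0)=x(k)$, $z_k(j+1)=Az_k(j)+Bv_k(j)$, $z_k(j)\in\mathcal{Z}_k(j)$ for $j=1,\ldots,N_k-1$, $v_k(j)\in\mathcal{V}_k(j)$ for $j=0,\ldots,N_k-1$, and $z_k(N_k)\in\{r(k+N_k)\}\oplus\mathcal{Z}_f$. Algorithm ATCS (parameter $\lambda$): at $k=0$ solve $\mathbb{P}_0(x(0),\{0\})$, obtaining $(J_0^*,N_0^*,v_0^*,z_0^* )$; set $\mathcal{Z}_{f,0}=\{0\}$, $\bar N=N_0^*$, apply $u(0)=v_0^*(0)$. Then, while $N^*_{k}>1$, increment $k$ and: solve $\mathbb{P}_k(x(k),\{0\})$ with optimal cost $\tilde J_k^*$ ($\tilde J_k^*=\infty$ if infeasible). If $\tilde J_k^*>J^*_{k-1}-\lambda$, set $\mathcal{Z}_{f,k}=\mathcal{Z}_{f,k-1}\oplus A_K^{N^*_{k-1}-1}\mathcal{W}$ and solve $\mathbb{P}_k(x(k),\mathcal{Z}_{f,k})$ with the additional constraint $N_k\le N^*_{k-1}-1$, letting its solution be $(J_k^*,N_k^*,v_k^*,z_k^* )$; otherwise let $(J_k^*,N_k^*,v_k^*,z_k^* )$ be the solution of $\mathbb{P}_k(x(k),\{0\})$, set $\mathcal{Z}_{f,k}=\{0\}$ and $\bar N=N_k^*$. Apply $u(k)=v_k^*(0)$, so $x(k+1)=Ax(k)+Bu(k)+w(k)$ with $w(k)\in\mathcal{W}$ arbitrary. Upon termination, return $\bar N$. *)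

theory Defs
  imports "HOL-Analysis.Analysis"
begin

definition msum :: "'a::ab_group_add set \<Rightarrow> 'a set \<Rightarrow> 'a set" where
  "msum P Q = {p + q | p q. p \<in> P \<and> q \<in> Q}"

definition pdiff :: "'a::ab_group_add set \<Rightarrow> 'a set \<Rightarrow> 'a set" where
  "pdiff P Q = {a. msum {a} Q \<subseteq> P}"

definition is_norm :: "('a::real_vector \<Rightarrow> real) \<Rightarrow> bool" where
  "is_norm f \<longleftrightarrow> (\<forall>x. 0 \<le> f x) \<and> (\<forall>x. f x = 0 \<longleftrightarrow> x = 0)
     \<and> (\<forall>c x. f (c *\<^sub>R x) = \<bar>c\<bar> * f x) \<and> (\<forall>x y. f (x + y) \<le> f x + f y)"

fun mpow :: "real^'n^'n \<Rightarrow> nat \<Rightarrow> real^'n^'n" where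
  "mpow M 0 = mat 1"
| "mpow M (Suc j) = M ** mpow M j"

definition is_schur :: "real^'n^'n \<Rightarrow> bool" where
  "is_schur M \<longleftrightarrow> (\<forall>(c::complex) (v::complex^'n).
      v \<noteq> 0 \<and> (\<chi> i. \<Sum>j\<in>UNIV. complex_of_real (M$i$j) * v$j) = (\<chi> i. c * v$i)
      \<longrightarrow> cmod c < 1)"

fun Sset :: "real^'n^'n \<Rightarrow> (real^'n) set \<Rightarrow> nat \<Rightarrow> (real^'n) set" where
  "Sset AK W 0 = {0}"
| "Sset AK W (Suc j) = msum (Sset AK W j) ((\<lambda>w. mpow AK j *v w) ` W)"

definition feas_sol ::
  "real^'n^'n \<Rightarrow> real^'m^'n \<Rightarrow> real^'n^'m \<Rightarrow> (nat \<Rightarrow> (real^'n) set) \<Rightarrow> (nat \<Rightarrow> (real^'m) set)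
   \<Rightarrow> (real^'n) set \<Rightarrow> (nat \<Rightarrow> real^'n) \<Rightarrow> nat \<Rightarrow> real^'n \<Rightarrow> (real^'n) set \<Rightarrow> nat option
   \<Rightarrow> nat \<Rightarrow> (nat \<Rightarrow> real^'m) \<Rightarrow> (nat \<Rightarrow> real^'n) \<Rightarrow> bool" where
  "feas_sol A B K X U W r k x Zf bnd N v z \<longleftrightarrow>
     1 \<le> N \<and> (case bnd of None \<Rightarrow> True | Some b \<Rightarrow> N \<le> b) \<and>
     z 0 = x \<and>
     (\<forall>j<N. z (Suc j) = A *v z j + B *v v j) \<and>
     (\<forall>j. 1 \<le> j \<and> j < N \<longrightarrow> z j \<in> pdiff (X (k + j)) (Sset (A + B ** K) W j)) \<and>
     (\<forall>j<N. v j \<in> pdiff (U (k + j)) ((\<lambda>s. K *v s) ` Sset (A + B ** K) W j)) \<and>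
     z N \<in> msum {r (k + N)} Zf"

definition cost ::
  "real \<Rightarrow> real \<Rightarrow> (real^'n \<Rightarrow> real) \<Rightarrow> (real^'m \<Rightarrow> real) \<Rightarrow> (nat \<Rightarrow> real^'n) \<Rightarrow> nat
   \<Rightarrow> nat \<Rightarrow> (nat \<Rightarrow> real^'m) \<Rightarrow> (nat \<Rightarrow> real^'n) \<Rightarrow> real" where
  "cost gz gv nz nv r k N v z =
     real N + gz * (\<Sum>j\<le>N. nz (z j - r (k + j))) + gv * (\<Sum>j<N. nv (v j))"

(* optimal value (+\<infinity> if infeasible) *)
definition optval where
  "optval A B K X U W r gz gv nz nv k x Zf bnd =
     Inf {ereal (cost gz gv nz nv r k N v z) | N v z. feas_sol A B K X U W r k x Zf bnd N v z}"

definition opt_sol where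
  "opt_sol A B K X U W r gz gv nz nv k x Zf bnd N v z \<longleftrightarrow>
     feas_sol A B K X U W r k x Zf bnd N v z \<and>
     ereal (cost gz gv nz nv r k N v z) = optval A B K X U W r gz gv nz nv k x Zf bnd"

(* iteration j \<ge> 1 of ATCS, executed correctly given the data of iteration j-1 *)
definition atcs_step where
  "atcs_step A B K X U W r gz gv nz nv lam x Ns vs zs Zf j \<longleftrightarrow>
     1 < Ns (j - 1) \<and>
     (if optval A B K X U W r gz gv nz nv j (x j) {0} None
           > ereal (cost gz gv nz nv r (j - 1) (Ns (j - 1)) (vs (j - 1)) (zs (j - 1)) - lam)
      then Zf j = msum (Zf (j - 1)) ((\<lambda>w. mpow (A + B ** K) (Ns (j - 1) - 1) *v w) ` W) \<and>
           opt_sol A B K X U W r gz gv nz nv j (x j) (Zf j) (Some (Ns (j - 1) - 1)) (Ns j) (vs j) (zs j)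
      else Zf j = {0} \<and>
           opt_sol A B K X U W r gz gv nz nv j (x j) {0} None (Ns j) (vs j) (zs j))"

(* closed loop run of ATCS: iterations 0..k executed, states x(0..k) generated by the plant *)
definition atcs_run where
  "atcs_run A B K X U W r gz gv nz nv lam x0 x w Ns vs zs Zf k \<longleftrightarrow>
     x 0 = x0 \<and>
     opt_sol A B K X U W r gz gv nz nv 0 (x 0) {0} None (Ns 0) (vs 0) (zs 0) \<and> Zf 0 = {0} \<and>
     (\<forall>j. 1 \<le> j \<and> j \<le> k \<longrightarrow> atcs_step A B K X U W r gz gv nz nv lam x Ns vs zs Zf j) \<and>
     (\<forall>j<k. w j \<in> W \<and> x (Suc j) = A *v x j + B *v vs j 0 + w j)"

end

(*
  (i) The previous optimal plan, shifted by one step and corrected by the closed-loop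
  response A_K^j w(k) to the realised disturbance, is feasible for the horizon N - 1:
  the extra term is absorbed by the tightening, because S(j+1) = S(j) + A_K^j W, and by
  the terminal set, which grows by A_K^(N-1) W. In the other branch the untightened
  problem has finite optimal value and hence is feasible.

  (ii) By the triangle inequality the cost of this candidate is at most
  J_k - 1 + gz * sum_j |A_K^j w| + gv * sum_j |K A_K^j w|; both series converge because
  the powers of the Schur matrix A_K decay exponentially, and by the choice of lambda the
  bracket is at most 1 - lambda. Optimality of the new plan finishes the argument.
*)

theory Submission
  imports Defs "Jordan_Normal_Form.Spectral_Radius"
begin

no_notation Matrix.vec_index (infixl "$" 100)

section \<open>Exponential decay of powers of Schur matrices\<close>

text \<open>Cartesian matrices of HOL-Analysis are transferred to the index-based matrices of
  Jordan_Normal_Form along an arbitrary enumeration of the finite index type.\<close>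

definition cart_index :: "nat \<Rightarrow> 'n::finite" where
  "cart_index = (SOME g. bij_betw g {..<CARD('n)} UNIV)"

definition cart_pos :: "'n::finite \<Rightarrow> nat" where
  "cart_pos = inv_into {..<CARD('n)} cart_index"

lemma bij_betw_cart_index: "bij_betw (cart_index :: nat \<Rightarrow> 'n::finite) {..<CARD('n)} UNIV"
proof -
  have "bij_betw (from_nat_into (UNIV :: 'n set)) {..<CARD('n)} UNIV"
    using bij_betw_from_nat_into_finite[of "UNIV :: 'n set"] by simp
  then show ?thesis
    unfolding cart_index_def by (rule someI[where P = "\<lambda>g. bij_betw g {..<CARD('n)} UNIV"])
qed

lemma cart_pos_less: "cart_pos (a :: 'n::finite) < CARD('n)"
  unfolding cart_pos_def using bij_betw_cart_index
  by (metis bij_betw_def inv_into_into lessThan_iff UNIV_I)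

lemma cart_index_pos [simp]: "cart_index (cart_pos a) = a"
  unfolding cart_pos_def using bij_betw_cart_index by (meson bij_betw_inv_into_right UNIV_I)

lemma cart_pos_index [simp]: "i < CARD('n::finite) \<Longrightarrow> cart_pos (cart_index i :: 'n) = i"
  unfolding cart_pos_def using bij_betw_cart_index by (meson bij_betw_inv_into_left lessThan_iff)

lemma sum_UNIV_cart_index: "(\<Sum>a\<in>UNIV. f a) = (\<Sum>i<CARD('n::finite). f (cart_index i :: 'n))"
  using sum.reindex_bij_betw[OF bij_betw_cart_index, of f] by simp

definition mat_of_cart :: "real^'n^'n \<Rightarrow> complex mat" where
  "mat_of_cart M = Matrix.mat CARD('n) CARD('n)
     (\<lambda>(i, j). complex_of_real (M $ cart_index i $ cart_index j))"

definition vec_of_cart :: "complex^'n \<Rightarrow> complex Matrix.vec" where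
  "vec_of_cart u = Matrix.vec CARD('n) (\<lambda>i. u $ cart_index i)"

definition cart_of_vec :: "complex Matrix.vec \<Rightarrow> complex^'n::finite" where
  "cart_of_vec v = (\<chi> a. Matrix.vec_index v (cart_pos a))"

lemma mat_of_cart_carrier [simp]: "mat_of_cart (M :: real^'n^'n) \<in> carrier_mat CARD('n) CARD('n)"
  by (simp add: mat_of_cart_def)

lemma vec_of_cart_carrier [simp]: "vec_of_cart (u :: complex^'n) \<in> carrier_vec CARD('n)"
  by (simp add: vec_of_cart_def)

lemma vec_of_cart_of_vec:
  "v \<in> carrier_vec CARD('n::finite) \<Longrightarrow> vec_of_cart (cart_of_vec v :: complex^'n) = v"
  by (rule eq_vecI) (auto simp: vec_of_cart_def cart_of_vec_def)

lemma mat_of_cart_mult_vec: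
  "mat_of_cart M *\<^sub>v vec_of_cart u = vec_of_cart (\<chi> i. \<Sum>j\<in>UNIV. complex_of_real (M$i$j) * u$j)"
  by (rule eq_vecI)
    (auto simp: mat_of_cart_def vec_of_cart_def scalar_prod_def atLeast0LessThan
      sum_UNIV_cart_index)

lemma mat_of_cart_mult: "mat_of_cart (M ** N) = mat_of_cart M * mat_of_cart (N :: real^'n^'n)"
  by (rule eq_matI)
    (auto simp: mat_of_cart_def matrix_matrix_mult_def scalar_prod_def atLeast0LessThan
      sum_UNIV_cart_index)

lemma mat_of_cart_mpow: "mat_of_cart (mpow M k) = mat_of_cart M ^\<^sub>m k"
proof (induction k)
  case 0
  show ?case
    by (rule eq_matI) (auto simp: mat_of_cart_def Finite_Cartesian_Product.mat_def,
        metis cart_pos_index)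
next
  case (Suc k)
  have "mpow M (Suc k) = mpow M k ** M"
    by (induction k) (simp_all add: matrix_mul_assoc)
  then show ?case
    using Suc by (simp add: mat_of_cart_mult)
qed

definition cart_eigenvalue :: "real^'n^'n \<Rightarrow> complex \<Rightarrow> bool" where
  "cart_eigenvalue M c \<longleftrightarrow> (\<exists>u :: complex^'n. u \<noteq> 0 \<and>
     (\<chi> i. \<Sum>j\<in>UNIV. complex_of_real (M$i$j) * u$j) = (\<chi> i. c * u$i))"

lemma is_schur_iff: "is_schur M \<longleftrightarrow> (\<forall>c. cart_eigenvalue M c \<longrightarrow> cmod c < 1)"
  unfolding is_schur_def cart_eigenvalue_def by blast

lemma vec_of_cart_inject: "vec_of_cart u = vec_of_cart u' \<longleftrightarrow> u = (u' :: complex^'n)"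
proof
  assume eq: "vec_of_cart u = vec_of_cart u'"
  have "u $ a = u' $ a" for a
    using arg_cong[OF eq, of "\<lambda>v. Matrix.vec_index v (cart_pos a)"]
    by (simp add: vec_of_cart_def cart_pos_less)
  then show "u = u'"
    by (simp add: Finite_Cartesian_Product.vec_eq_iff)
qed simp

lemma vec_of_cart_eq_0_iff: "vec_of_cart u = 0\<^sub>v CARD('n) \<longleftrightarrow> (u :: complex^'n) = 0"
proof -
  have "0\<^sub>v CARD('n) = vec_of_cart (0 :: complex^'n)"
    by (rule eq_vecI) (auto simp: vec_of_cart_def)
  then show ?thesis
    by (simp add: vec_of_cart_inject)
qed

lemma vec_of_cart_scale: "vec_of_cart (\<chi> i. c * u$i) = c \<cdot>\<^sub>v vec_of_cart u"
  by (rule eq_vecI) (auto simp: vec_of_cart_def)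

lemma eigenvalue_mat_of_cart_iff:
  "eigenvalue (mat_of_cart (M :: real^'n^'n)) c \<longleftrightarrow> cart_eigenvalue M c"
proof
  assume "eigenvalue (mat_of_cart M) c"
  then obtain v where v: "v \<in> carrier_vec CARD('n)" "v \<noteq> 0\<^sub>v CARD('n)"
    "mat_of_cart M *\<^sub>v v = c \<cdot>\<^sub>v v"
    unfolding eigenvalue_def eigenvector_def by (auto simp: mat_of_cart_def)
  define u :: "complex^'n" where "u = cart_of_vec v"
  have v_eq: "v = vec_of_cart u"
    unfolding u_def using v(1) by (rule vec_of_cart_of_vec[symmetric])
  have "vec_of_cart (\<chi> i. \<Sum>j\<in>UNIV. complex_of_real (M$i$j) * u$j) = vec_of_cart (\<chi> i. c * u$i)"
    using v(3) unfolding v_eq mat_of_cart_mult_vec vec_of_cart_scale .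
  moreover have "u \<noteq> 0"
    using v(2) unfolding v_eq vec_of_cart_eq_0_iff .
  ultimately show "cart_eigenvalue M c"
    unfolding cart_eigenvalue_def vec_of_cart_inject by blast
next
  assume "cart_eigenvalue M c"
  then obtain u :: "complex^'n" where u: "u \<noteq> 0"
    and eq: "(\<chi> i. \<Sum>j\<in>UNIV. complex_of_real (M$i$j) * u$j) = (\<chi> i. c * u$i)"
    unfolding cart_eigenvalue_def by blast
  have "eigenvector (mat_of_cart M) (vec_of_cart u) c"
    unfolding eigenvector_def mat_of_cart_mult_vec eq vec_of_cart_scale
    using u by (simp add: vec_of_cart_eq_0_iff mat_of_cart_def)
  then show "eigenvalue (mat_of_cart M) c"
    unfolding eigenvalue_def by blast
qed

lemma cart_eigenvalue_le_spectral_radius: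
  assumes "cart_eigenvalue (M :: real^'n^'n) c"
  shows "cmod c \<le> spectral_radius (mat_of_cart M)"
proof (rule spectral_radius_mem_max(2)[OF mat_of_cart_carrier])
  show "cmod c \<in> cmod ` spectrum (mat_of_cart M)"
    using assms by (simp add: spectrum_def eigenvalue_mat_of_cart_iff)
qed simp

lemma is_schur_iff_spectral_radius:
  "is_schur (M :: real^'n^'n) \<longleftrightarrow> spectral_radius (mat_of_cart M) < 1"
proof -
  obtain c where c: "cart_eigenvalue M c" "spectral_radius (mat_of_cart M) = cmod c"
    using spectral_radius_mem_max(1)[OF mat_of_cart_carrier[of M]]
    by (auto simp: spectrum_def eigenvalue_mat_of_cart_iff)
  show ?thesis
  proof
    assume "is_schur M"
    then show "spectral_radius (mat_of_cart M) < 1"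
      using c unfolding is_schur_iff by simp
  next
    assume "spectral_radius (mat_of_cart M) < 1"
    then show "is_schur M"
      unfolding is_schur_iff using cart_eigenvalue_le_spectral_radius by fastforce
  qed
qed

lemma cart_eigenvalue_scaleR:
  assumes "cart_eigenvalue M c"
  shows "cart_eigenvalue (t *\<^sub>R M) (complex_of_real t * c)"
proof -
  obtain u where u: "u \<noteq> 0" "\<And>i. (\<Sum>j\<in>UNIV. complex_of_real (M$i$j) * u$j) = c * u$i"
    using assms unfolding cart_eigenvalue_def Finite_Cartesian_Product.vec_eq_iff by auto
  have "(\<Sum>j\<in>UNIV. complex_of_real ((t *\<^sub>R M)$i$j) * u$j) = complex_of_real t * c * u$i" for i
    using u(2)[of i] by (simp add: sum_distrib_left[symmetric] mult.assoc)
  with u(1) show ?thesis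
    unfolding cart_eigenvalue_def Finite_Cartesian_Product.vec_eq_iff by auto
qed

lemma mpow_scaleR: "mpow (t *\<^sub>R M) k = t ^ k *\<^sub>R mpow M k"
  by (induction k) (simp_all add: scalar_matrix_assoc[symmetric] matrix_scalar_ac)

lemma is_schur_bounded_mpow:
  assumes "is_schur M"
  obtains C where "\<And>k a b. \<bar>mpow M k $ a $ b\<bar> \<le> C"
proof -
  obtain C where C: "\<And>k. norm_bound (mat_of_cart M ^\<^sub>m k) C"
    using spectral_radius_jnf_norm_bound_less_1_upper_triangular[OF mat_of_cart_carrier] assms
    unfolding is_schur_iff_spectral_radius by blast
  have "\<bar>mpow M k $ a $ b\<bar> \<le> C" for k a b
    using C[of k, folded mat_of_cart_mpow] cart_pos_less[of a] cart_pos_less[of b]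
    unfolding norm_bound_def by (force simp: mat_of_cart_def)
  then show thesis by (rule that)
qed

lemma is_schur_exponential_decay:
  fixes M :: "real^'n^'n"
  assumes "is_schur M"
  obtains C \<rho> where "0 < \<rho>" "\<rho> < 1" "\<And>k w. norm (mpow M k *v w) \<le> C * \<rho> ^ k * norm w"
proof -
  txt \<open>The library only bounds the powers when the spectral radius is below 1; applied to
    \<open>M /\<^sub>R \<rho>\<close> with spectral radius below \<open>\<rho> < 1\<close> this yields the rate \<open>\<rho>\<close>.\<close>
  define \<rho> where "\<rho> = (1 + spectral_radius (mat_of_cart M)) / 2"
  have sr: "0 \<le> spectral_radius (mat_of_cart M)" "spectral_radius (mat_of_cart M) < 1"
    using spectral_radius_mem_max(1)[OF mat_of_cart_carrier, of M] assms
    by (auto simp: is_schur_iff_spectral_radius)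
  then have \<rho>: "0 < \<rho>" "\<rho> < 1" "spectral_radius (mat_of_cart M) < \<rho>"
    unfolding \<rho>_def by auto
  have "is_schur (inverse \<rho> *\<^sub>R M)"
    unfolding is_schur_iff
  proof (intro allI impI)
    fix c assume "cart_eigenvalue (inverse \<rho> *\<^sub>R M) c"
    then have "cart_eigenvalue (\<rho> *\<^sub>R (inverse \<rho> *\<^sub>R M)) (complex_of_real \<rho> * c)"
      by (rule cart_eigenvalue_scaleR)
    then have "cart_eigenvalue M (complex_of_real \<rho> * c)"
      using \<rho>(1) by simp
    then have "cmod (complex_of_real \<rho> * c) \<le> spectral_radius (mat_of_cart M)"
      by (rule cart_eigenvalue_le_spectral_radius)
    then have "\<rho> * cmod c \<le> spectral_radius (mat_of_cart M)"
      using \<rho>(1) by (simp add: norm_mult)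
    then have "\<rho> * cmod c < \<rho> * 1"
      using \<rho>(3) by linarith
    then show "cmod c < 1"
      using \<rho>(1) by (simp only: mult_less_cancel_left_pos)
  qed
  then obtain C where C: "\<And>k a b. \<bar>mpow (inverse \<rho> *\<^sub>R M) k $ a $ b\<bar> \<le> C"
    using is_schur_bounded_mpow by blast
  have entries: "\<bar>mpow M k $ a $ b\<bar> \<le> \<rho> ^ k * C" for k a b
  proof -
    have "mpow M k = \<rho> ^ k *\<^sub>R mpow (inverse \<rho> *\<^sub>R M) k"
      using \<rho>(1) by (simp add: mpow_scaleR field_simps)
    then show ?thesis
      using C[of k a b] \<rho>(1) by (simp add: abs_mult mult_left_mono)
  qed
  have "norm (mpow M k *v w) \<le> (real CARD('n) * real CARD('n) * C) * \<rho> ^ k * norm w" for k w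
  proof -
    have "norm (mpow M k *v w) \<le> onorm ((*v) (mpow M k)) * norm w"
      by (rule onorm[OF matrix_vector_mul_bounded_linear])
    also have "\<dots> \<le> real CARD('n) * real CARD('n) * (\<rho> ^ k * C) * norm w"
      by (intro mult_right_mono onorm_le_matrix_component entries norm_ge_zero)
    finally show ?thesis
      by (simp add: algebra_simps)
  qed
  with \<rho>(1,2) show thesis
    by (rule that)
qed

lemma is_norm_zero: "is_norm f \<Longrightarrow> f 0 = 0"
  by (simp add: is_norm_def)

lemma is_norm_le_norm:
  fixes f :: "'a::euclidean_space \<Rightarrow> real"
  assumes f: "is_norm f"
  obtains C where "\<And>y. f y \<le> C * norm y"
proof
  fix y :: 'a
  have triangle: "f (sum g S) \<le> (\<Sum>i\<in>S. f (g i))" for g :: "'a \<Rightarrow> 'a" and S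
  proof (induction S rule: infinite_finite_induct)
    case (insert i S)
    then show ?case
      using f unfolding is_norm_def by (smt (verit) sum.insert)
  qed (simp_all add: is_norm_zero[OF f])
  have "f y = f (\<Sum>b\<in>Basis. inner y b *\<^sub>R b)"
    by (simp add: euclidean_representation)
  also have "\<dots> \<le> (\<Sum>b\<in>Basis. f (inner y b *\<^sub>R b))"
    by (rule triangle)
  also have "\<dots> = (\<Sum>b\<in>Basis. \<bar>inner y b\<bar> * f b)"
    using f by (simp add: is_norm_def)
  also have "\<dots> \<le> (\<Sum>b\<in>Basis. norm y * f b)"
    by (intro sum_mono mult_right_mono) (use f Basis_le_norm in \<open>auto simp: is_norm_def\<close>)
  finally show "f y \<le> (\<Sum>b\<in>Basis. f b) * norm y"
    by (simp add: sum_distrib_left mult.commute)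
qed

lemma summable_is_norm_mpow:
  fixes M :: "real^'n^'n" and L :: "real^'n^'m"
  assumes "is_schur M" and f: "is_norm f"
  shows "summable (\<lambda>j. f (L *v (mpow M j *v w)))"
proof -
  obtain C \<rho> where \<rho>: "0 < \<rho>" "\<rho> < 1"
    and decay: "\<And>k. norm (mpow M k *v w) \<le> C * \<rho> ^ k * norm w"
    using is_schur_exponential_decay[OF assms(1)] by metis
  obtain D where D: "\<And>y. f y \<le> D * norm y"
    using is_norm_le_norm[OF f] by blast
  define E where "E = \<bar>D\<bar> * onorm ((*v) L) * C * norm w"
  have bound: "norm (f (L *v (mpow M j *v w))) \<le> E * \<rho> ^ j" for j
  proof -
    have "norm (f (L *v (mpow M j *v w))) = f (L *v (mpow M j *v w))"
      using f unfolding is_norm_def by simp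
    also have "\<dots> \<le> \<bar>D\<bar> * norm (L *v (mpow M j *v w))"
      using D[of "L *v (mpow M j *v w)"] by (simp add: abs_ge_self mult_right_mono order_trans)
    also have "\<dots> \<le> \<bar>D\<bar> * (onorm ((*v) L) * norm (mpow M j *v w))"
      by (simp add: mult_left_mono onorm)
    also have "\<dots> \<le> \<bar>D\<bar> * (onorm ((*v) L) * (C * \<rho> ^ j * norm w))"
      by (simp add: mult_left_mono decay onorm_pos_le)
    also have "\<dots> = E * \<rho> ^ j"
      by (simp add: E_def mult_ac)
    finally show ?thesis .
  qed
  show ?thesis
  proof (rule summable_comparison_test)
    show "\<exists>N. \<forall>j\<ge>N. norm (f (L *v (mpow M j *v w))) \<le> E * \<rho> ^ j"
      using bound by blast
    show "summable (\<lambda>j. E * \<rho> ^ j)"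
      using \<rho> by (intro summable_mult summable_geometric) simp
  qed
qed

lemma is_norm_shifted_sum_le:
  assumes f: "is_norm f" and summable: "summable (\<lambda>j. f (d j))"
  shows "(\<Sum>j<n. f (x (Suc j) + d j)) \<le> (\<Sum>j<Suc n. f (x j)) - f (x 0) + (\<Sum>j. f (d j))"
proof -
  have "(\<Sum>j<n. f (x (Suc j) + d j)) \<le> (\<Sum>j<n. f (x (Suc j)) + f (d j))"
    using f unfolding is_norm_def by (intro sum_mono) blast
  also have "\<dots> = (\<Sum>j<Suc n. f (x j)) - f (x 0) + (\<Sum>j<n. f (d j))"
    unfolding sum.lessThan_Suc_shift by (simp add: sum.distrib)
  also have "(\<Sum>j<n. f (d j)) \<le> (\<Sum>j. f (d j))"
    using f summable unfolding is_norm_def by (intro sum_le_suminf) auto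
  finally show ?thesis
    by simp
qed

section \<open>The shifted candidate solution\<close>

lemma pdiff_msum_add: "a \<in> pdiff P (msum Q R) \<Longrightarrow> b \<in> R \<Longrightarrow> a + b \<in> pdiff P Q"
  unfolding pdiff_def msum_def by (force simp: ac_simps)

lemma linear_image_msum: "linear f \<Longrightarrow> f ` msum P Q = msum (f ` P) (f ` Q)"
  unfolding msum_def by (force simp: linear_add)

lemma msum_add_mem: "a \<in> msum P Q \<Longrightarrow> b \<in> R \<Longrightarrow> a + b \<in> msum P (msum Q R)"
  unfolding msum_def by (force simp: add.assoc)

text \<open>The candidate at time \<open>k + 1\<close>: the tail of the plan computed at time \<open>k\<close> plus the
  response of the closed loop \<open>A + B K\<close> to the disturbance \<open>w(k)\<close>.\<close>

definition shifted_states ::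
  "real^'n^'n \<Rightarrow> (nat \<Rightarrow> real^'n) \<Rightarrow> real^'n \<Rightarrow> nat \<Rightarrow> real^'n" where
  "shifted_states M z w j = z (Suc j) + mpow M j *v w"

definition shifted_inputs ::
  "real^'n^'m \<Rightarrow> real^'n^'n \<Rightarrow> (nat \<Rightarrow> real^'m) \<Rightarrow> real^'n \<Rightarrow> nat \<Rightarrow> real^'m" where
  "shifted_inputs K M v w j = v (Suc j) + K *v (mpow M j *v w)"

lemma mpow_closed_loop_Suc:
  "mpow (A + B ** K) (Suc j) *v w
     = A *v (mpow (A + B ** K) j *v w) + B *v (K *v (mpow (A + B ** K) j *v w))"
  by (simp add: matrix_vector_mul_assoc[symmetric] matrix_vector_mult_add_rdistrib)

lemma feas_sol_shifted:
  fixes A :: "real^'n^'n" and B :: "real^'m^'n" and K :: "real^'n^'m"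
  defines "M \<equiv> A + B ** K"
  assumes feas: "feas_sol A B K X U W r k x Zf bnd N v z" and N: "1 < N" and w: "w \<in> W"
  shows "feas_sol A B K X U W r (Suc k) (A *v x + B *v v 0 + w)
     (msum Zf ((\<lambda>w. mpow M (N - 1) *v w) ` W)) (Some (N - 1)) (N - 1)
     (shifted_inputs K M v w) (shifted_states M z w)"
proof -
  have z0: "z 0 = x" and dyn: "\<And>j. j < N \<Longrightarrow> z (Suc j) = A *v z j + B *v v j"
    and states: "\<And>j. 1 \<le> j \<Longrightarrow> j < N \<Longrightarrow> z j \<in> pdiff (X (k + j)) (Sset M W j)"
    and inputs: "\<And>j. j < N \<Longrightarrow> v j \<in> pdiff (U (k + j)) ((\<lambda>s. K *v s) ` Sset M W j)"
    and terminal: "z N \<in> msum {r (k + N)} Zf"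
    using feas unfolding feas_sol_def M_def by auto
  have disturbance: "mpow M j *v w \<in> (\<lambda>w. mpow M j *v w) ` W" for j
    using w by blast
  have Sset_Suc: "Sset M W (Suc j) = msum (Sset M W j) ((\<lambda>w. mpow M j *v w) ` W)" for j
    by simp
  have "shifted_states M z w (Suc j) = A *v shifted_states M z w j + B *v shifted_inputs K M v w j"
    if "j < N - 1" for j
    using dyn[of "Suc j"] that
    unfolding shifted_states_def shifted_inputs_def M_def mpow_closed_loop_Suc
    by (simp add: matrix_vector_right_distrib)
  moreover have "shifted_states M z w j \<in> pdiff (X (Suc k + j)) (Sset M W j)"
    if "j < N - 1" for j
    using pdiff_msum_add[OF states[of "Suc j", unfolded Sset_Suc] disturbance] that
    by (simp add: shifted_states_def)
  moreover have "shifted_inputs K M v w j \<in> pdiff (U (Suc k + j)) ((\<lambda>s. K *v s) ` Sset M W j)"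
    if "j < N - 1" for j
  proof -
    have "v (Suc j) \<in> pdiff (U (k + Suc j))
        (msum ((\<lambda>s. K *v s) ` Sset M W j) ((\<lambda>s. K *v s) ` (\<lambda>w. mpow M j *v w) ` W))"
      using inputs[of "Suc j"] that
      by (simp add: linear_image_msum[OF matrix_vector_mul_linear, symmetric])
    from pdiff_msum_add[OF this imageI[OF disturbance]] show ?thesis
      by (simp add: shifted_inputs_def)
  qed
  moreover have "shifted_states M z w (N - 1)
      \<in> msum {r (Suc k + (N - 1))} (msum Zf ((\<lambda>w. mpow M (N - 1) *v w) ` W))"
    using msum_add_mem[OF terminal disturbance] N by (simp add: shifted_states_def)
  moreover have "shifted_states M z w 0 = A *v x + B *v v 0 + w"
    using dyn[of 0] N z0 by (simp add: shifted_states_def)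
  ultimately show ?thesis
    unfolding feas_sol_def M_def[symmetric] using N by auto
qed

lemma cost_shifted_le:
  fixes M :: "real^'n^'n" and K :: "real^'n^'m"
  assumes "is_schur M" and gz: "gz \<ge> 0" and gv: "gv \<ge> 0"
    and nz: "is_norm nz" and nv: "is_norm nv" and N: "0 < N"
  shows "cost gz gv nz nv r (Suc k) (N - 1) (shifted_inputs K M v w) (shifted_states M z w)
     \<le> cost gz gv nz nv r k N v z - 1
        + (gz * (\<Sum>j. nz (mpow M j *v w)) + gv * (\<Sum>j. nv (K *v (mpow M j *v w))))"
proof -
  obtain m where m: "N = Suc m"
    using N gr0_implies_Suc by blast
  define e where "e j = z j - r (k + j)" for j
  define Sz where "Sz = (\<Sum>j. nz (mpow M j *v w))"
  define Sv where "Sv = (\<Sum>j. nv (K *v (mpow M j *v w)))"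
  have "summable (\<lambda>j. nz (Finite_Cartesian_Product.mat 1 *v (mpow M j *v w)))"
    by (rule summable_is_norm_mpow[OF assms(1) nz])
  then have states: "(\<Sum>j<Suc m. nz (e (Suc j) + mpow M j *v w))
      \<le> (\<Sum>j<Suc (Suc m). nz (e j)) - nz (e 0) + Sz"
    unfolding Sz_def by (intro is_norm_shifted_sum_le[OF nz]) simp
  have inputs: "(\<Sum>j<m. nv (v (Suc j) + K *v (mpow M j *v w)))
      \<le> (\<Sum>j<Suc m. nv (v j)) - nv (v 0) + Sv"
    unfolding Sv_def by (intro is_norm_shifted_sum_le[OF nv] summable_is_norm_mpow[OF assms(1) nv])
  have "0 \<le> gz * nz (e 0)" "0 \<le> gv * nv (v 0)"
    using nz nv gz gv unfolding is_norm_def by auto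
  have "cost gz gv nz nv r (Suc k) (N - 1) (shifted_inputs K M v w) (shifted_states M z w)
      = real m + gz * (\<Sum>j<Suc m. nz (e (Suc j) + mpow M j *v w))
        + gv * (\<Sum>j<m. nv (v (Suc j) + K *v (mpow M j *v w)))"
    unfolding cost_def shifted_inputs_def shifted_states_def e_def m
    by (simp add: lessThan_Suc_atMost algebra_simps)
  also have "\<dots> \<le> real m + gz * ((\<Sum>j<Suc (Suc m). nz (e j)) - nz (e 0) + Sz)
        + gv * ((\<Sum>j<Suc m. nv (v j)) - nv (v 0) + Sv)"
    using states inputs gz gv by (intro add_mono mult_left_mono order_refl)
  also have "\<dots> \<le> cost gz gv nz nv r k N v z - 1 + (gz * Sz + gv * Sv)"
    using \<open>0 \<le> gz * nz (e 0)\<close> \<open>0 \<le> gv * nv (v 0)\<close>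
    unfolding cost_def e_def m by (simp add: lessThan_Suc_atMost algebra_simps)
  finally show ?thesis
    unfolding Sz_def Sv_def .
qed

lemma opt_sol_cost_le:
  assumes "opt_sol A B K X U W r gz gv nz nv k x Zf bnd N v z"
    and "feas_sol A B K X U W r k x Zf bnd N' v' z'"
  shows "cost gz gv nz nv r k N v z \<le> cost gz gv nz nv r k N' v' z'"
proof -
  have "optval A B K X U W r gz gv nz nv k x Zf bnd \<le> ereal (cost gz gv nz nv r k N' v' z')"
    unfolding optval_def using assms(2) by (blast intro: Inf_lower)
  then show ?thesis
    using assms(1) unfolding opt_sol_def by (metis ereal_less_eq(3))
qed

lemma feasible_if_optval_finite:
  assumes "optval A B K X U W r gz gv nz nv k x Zf bnd \<le> ereal c"
  shows "\<exists>N v z. feas_sol A B K X U W r k x Zf bnd N v z"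
proof (rule ccontr)
  assume "\<not> ?thesis"
  then have "optval A B K X U W r gz gv nz nv k x Zf bnd = \<infinity>"
    unfolding optval_def by (simp add: top_ereal_def[symmetric])
  with assms show False
    by simp
qed

lemma atcs_run_opt_sol:
  assumes "atcs_run A B K X U W r gz gv nz nv lam x0 x w Ns vs zs Zf k"
  obtains bnd where "opt_sol A B K X U W r gz gv nz nv k (x k) (Zf k) bnd (Ns k) (vs k) (zs k)"
proof (cases k)
  case 0
  with assms that show thesis
    unfolding atcs_run_def by auto
next
  case (Suc j)
  with assms have "atcs_step A B K X U W r gz gv nz nv lam x Ns vs zs Zf k"
    unfolding atcs_run_def by auto
  with that show thesis
    unfolding atcs_step_def by (auto split: if_splits)
qed

lemma atcs_run_SucD:
  "atcs_run A B K X U W r gz gv nz nv lam x0 x w Ns vs zs Zf (Suc k)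
    \<Longrightarrow> atcs_run A B K X U W r gz gv nz nv lam x0 x w Ns vs zs Zf k"
  unfolding atcs_run_def by auto

lemma atcs_recursive_feasibility:
  assumes run: "atcs_run A B K X U W r gz gv nz nv lam x0 x w Ns vs zs Zf k"
    and N: "1 < Ns k" and w: "w k \<in> W" and x: "x (Suc k) = A *v x k + B *v vs k 0 + w k"
  shows "if optval A B K X U W r gz gv nz nv (Suc k) (x (Suc k)) {0} None
             > ereal (cost gz gv nz nv r k (Ns k) (vs k) (zs k) - lam)
         then (\<exists>N v z. feas_sol A B K X U W r (Suc k) (x (Suc k))
                 (msum (Zf k) ((\<lambda>w. mpow (A + B ** K) (Ns k - 1) *v w) ` W)) (Some (Ns k - 1)) N v z)
         else (\<exists>N v z. feas_sol A B K X U W r (Suc k) (x (Suc k)) {0} None N v z)"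
proof -
  obtain bnd where "opt_sol A B K X U W r gz gv nz nv k (x k) (Zf k) bnd (Ns k) (vs k) (zs k)"
    using atcs_run_opt_sol[OF run] .
  then have "feas_sol A B K X U W r k (x k) (Zf k) bnd (Ns k) (vs k) (zs k)"
    unfolding opt_sol_def by blast
  from feas_sol_shifted[OF this N w] show ?thesis
    unfolding x by (auto intro: feasible_if_optval_finite simp: not_less)
qed

lemma atcs_cost_decrease:
  fixes A :: "real^'n^'n" and B :: "real^'m^'n" and K :: "real^'n^'m"
  assumes "is_schur (A + B ** K)" and "gz \<ge> 0" and "gv \<ge> 0" and "is_norm nz" and "is_norm nv"
    and lam: "ereal lam = 1 - (SUP w\<in>W. ereal (gz * (\<Sum>j. nz (mpow (A + B ** K) j *v w))
                                        + gv * (\<Sum>j. nv (K *v (mpow (A + B ** K) j *v w)))))"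
    and run: "atcs_run A B K X U W r gz gv nz nv lam x0 x w Ns vs zs Zf (Suc k)"
  shows "cost gz gv nz nv r (Suc k) (Ns (Suc k)) (vs (Suc k)) (zs (Suc k))
           \<le> cost gz gv nz nv r k (Ns k) (vs k) (zs k) - lam"
proof -
  let ?M = "A + B ** K"
  let ?J = "cost gz gv nz nv r k (Ns k) (vs k) (zs k)"
  have step: "atcs_step A B K X U W r gz gv nz nv lam x Ns vs zs Zf (Suc k)"
    and w: "w k \<in> W" and x: "x (Suc k) = A *v x k + B *v vs k 0 + w k"
    using run unfolding atcs_run_def by auto
  show ?thesis
  proof (cases "optval A B K X U W r gz gv nz nv (Suc k) (x (Suc k)) {0} None > ereal (?J - lam)")
    case False
    with step have "ereal (cost gz gv nz nv r (Suc k) (Ns (Suc k)) (vs (Suc k)) (zs (Suc k)))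
        \<le> ereal (?J - lam)"
      unfolding atcs_step_def opt_sol_def by (simp add: not_less)
    then show ?thesis
      by simp
  next
    case True
    have N: "1 < Ns k"
      using step unfolding atcs_step_def by simp
    obtain bnd where "opt_sol A B K X U W r gz gv nz nv k (x k) (Zf k) bnd (Ns k) (vs k) (zs k)"
      using atcs_run_opt_sol[OF atcs_run_SucD[OF run]] .
    then have "feas_sol A B K X U W r k (x k) (Zf k) bnd (Ns k) (vs k) (zs k)"
      unfolding opt_sol_def by blast
    from feas_sol_shifted[OF this N w] True step
    have "cost gz gv nz nv r (Suc k) (Ns (Suc k)) (vs (Suc k)) (zs (Suc k))
        \<le> cost gz gv nz nv r (Suc k) (Ns k - 1)
             (shifted_inputs K ?M (vs k) (w k)) (shifted_states ?M (zs k) (w k))"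
      unfolding atcs_step_def x[symmetric] by (auto intro: opt_sol_cost_le)
    also have "\<dots> \<le> ?J - 1
        + (gz * (\<Sum>j. nz (mpow ?M j *v w k)) + gv * (\<Sum>j. nv (K *v (mpow ?M j *v w k))))"
      using N by (intro cost_shifted_le assms(1-5)) simp
    also have "\<dots> \<le> ?J - lam"
    proof -
      define S where "S = (SUP w\<in>W. ereal (gz * (\<Sum>j. nz (mpow ?M j *v w))
                                        + gv * (\<Sum>j. nv (K *v (mpow ?M j *v w)))))"
      have "S = ereal (1 - lam)"
        using lam unfolding S_def[symmetric] by (cases S) (auto simp: one_ereal_def)
      moreover have "ereal (gz * (\<Sum>j. nz (mpow ?M j *v w k))
          + gv * (\<Sum>j. nv (K *v (mpow ?M j *v w k)))) \<le> S"
        unfolding S_def by (rule SUP_upper[OF w])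
      ultimately show ?thesis
        by simp
    qed
    finally show ?thesis .
  qed
qed

theorem theorem1:
  fixes A :: "real^'n^'n" and B :: "real^'m^'n" and K :: "real^'n^'m"
    and X :: "nat \<Rightarrow> (real^'n) set" and U :: "nat \<Rightarrow> (real^'m) set" and W :: "(real^'n) set"
    and r :: "nat \<Rightarrow> real^'n" and gz gv lam :: real
    and nz :: "real^'n \<Rightarrow> real" and nv :: "real^'m \<Rightarrow> real" and x0 :: "real^'n"
  assumes "\<And>k. convex (X k)" and "\<And>k. convex (U k)" and "convex W"
    and "is_schur (A + B ** K)"
    and "gz \<ge> 0" and "gv \<ge> 0" and "is_norm nz" and "is_norm nv"
    and "\<exists>N v z. feas_sol A B K X U W r 0 x0 {0} None N v z"
  shows
   "(\<forall>x w Ns vs zs Zf k.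
       atcs_run A B K X U W r gz gv nz nv lam x0 x w Ns vs zs Zf k \<and> 1 < Ns k \<and>
       w k \<in> W \<and> x (Suc k) = A *v x k + B *v vs k 0 + w k \<longrightarrow>
       (if optval A B K X U W r gz gv nz nv (Suc k) (x (Suc k)) {0} None
             > ereal (cost gz gv nz nv r k (Ns k) (vs k) (zs k) - lam)
        then (\<exists>N v z. feas_sol A B K X U W r (Suc k) (x (Suc k))
                 (msum (Zf k) ((\<lambda>w. mpow (A + B ** K) (Ns k - 1) *v w) ` W)) (Some (Ns k - 1)) N v z)
        else (\<exists>N v z. feas_sol A B K X U W r (Suc k) (x (Suc k)) {0} None N v z)))
    \<and>
    (lam > 0 \<and>
     ereal lam = 1 - (SUP w\<in>W. ereal (gz * (\<Sum>j. nz (mpow (A + B ** K) j *v w))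
                                     + gv * (\<Sum>j. nv (K *v (mpow (A + B ** K) j *v w)))))
     \<longrightarrow> (\<forall>x w Ns vs zs Zf k.
            atcs_run A B K X U W r gz gv nz nv lam x0 x w Ns vs zs Zf (Suc k) \<longrightarrow>
            cost gz gv nz nv r (Suc k) (Ns (Suc k)) (vs (Suc k)) (zs (Suc k))
              \<le> cost gz gv nz nv r k (Ns k) (vs k) (zs k) - lam))"
  by (intro conjI impI allI)
    (blast intro: atcs_recursive_feasibility atcs_cost_decrease[OF assms(4-8)])+

end
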